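(* Let $n\ge2$ and $\mathbf b=(b_1,\dots,b_{n-1})\in\mathbb R^{n-1}$ with $\mathbf b\notin\mathcal W^+_n(1,n-1)$. Then the map $\mathbb R\to\mathbb R^n$, $x\mapsto(x,b_1x,\dots,b_{n-1}x)$, is extremal.
   Context: Sup-norms. For a row vector $\mathbf y\in\mathbb R^k$ and $v>0$, $\mathbf y\in\mathcal W_v(1,k)$ if there are infinitely many $\mathbf q\in\mathbb Z^k$ with $|\mathbf y\mathbf q+p|\le\|\mathbf q\|^{-v}$ for some $p\in\mathbb Z$; $\mathcal W^+_v(1,k)=\bigcup_{u>v}\mathcal W_u(1,k)$. $\mathbf y\in\mathbb R^n$ is very well approximable (VWA) if $\mathbf y\in\mathcal W_v(1,n)$ for some $v>n$; a map is extremal if almost every point of its domain is mapped to a non-VWA vector. *)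

theory Defs
  imports "HOL-Analysis.Analysis"
begin

text \<open>Vectors in R^k / Z^k are represented as functions on nat; only the
indices i < k are relevant.  Integer vectors are required to vanish for i >= k,
so that distinct functions correspond to distinct vectors of Z^k.\<close>

definition supnorm :: "nat \<Rightarrow> (nat \<Rightarrow> int) \<Rightarrow> real" where
  "supnorm k q = (MAX i \<in> {..<k}. \<bar>real_of_int (q i)\<bar>)"

definition W :: "real \<Rightarrow> nat \<Rightarrow> (nat \<Rightarrow> real) set" where
  "W v k = {y. infinite {q :: nat \<Rightarrow> int. (\<forall>i\<ge>k. q i = 0) \<and>
      (\<exists>p :: int. \<bar>(\<Sum>i<k. y i * real_of_int (q i)) + real_of_int p\<bar>
                    \<le> supnorm k q powr (- v))}}"

definition W_plus :: "real \<Rightarrow> nat \<Rightarrow> (nat \<Rightarrow> real) set" where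
  "W_plus v k = (\<Union>u \<in> {u. u > v}. W u k)"

definition VWA :: "nat \<Rightarrow> (nat \<Rightarrow> real) \<Rightarrow> bool" where
  "VWA n y \<longleftrightarrow> (\<exists>v > real n. y \<in> W v n)"

definition extremal :: "nat \<Rightarrow> (real \<Rightarrow> (nat \<Rightarrow> real)) \<Rightarrow> bool" where
  "extremal n f \<longleftrightarrow> (AE x in lborel. \<not> VWA n (f x))"

end

theory Submission
  imports Defs
begin

text \<open>The point \<open>x (1, b)\<close> pairs with an integer vector \<open>q = (q\<^sub>0, q')\<close> to \<open>x L(q)\<close>, where
  \<open>L(q) = q\<^sub>0 + b \<cdot> q'\<close>. Fix an exponent \<open>v > n\<close> and an annulus \<open>a \<le> \<bar>x\<bar> \<le> M\<close>. If \<open>\<bar>L(q)\<bar>\<close> is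
  not tiny, the \<open>x\<close> in the annulus with \<open>x L(q)\<close> within \<open>\<bar>q\<bar>\<^sup>-\<^sup>v\<close> of an integer form a set of measure
  \<open>O(M \<bar>q\<bar>\<^sup>-\<^sup>v)\<close>; since \<open>\<Sum>\<^sub>q \<bar>q\<bar>\<^sup>-\<^sup>v < \<infinity>\<close> for \<open>v > n\<close> (compare with a product of one-dimensional
  sums), Borel-Cantelli shows that almost every \<open>x\<close> lies in only finitely many of these sets.
  The remaining \<open>q\<close>, with \<open>\<bar>L(q)\<bar> \<le> \<bar>q\<bar>\<^sup>-\<^sup>v / a\<close>, are finitely many because \<open>b \<notin> W\<^sup>+\<^sub>n(1, n - 1)\<close>:
  for an intermediate exponent \<open>n < u < v\<close> their tails \<open>q'\<close> satisfy \<open>\<bar>L(q)\<bar> \<le> \<bar>q'\<bar>\<^sup>-\<^sup>u\<close> once \<open>\<bar>q'\<bar>\<close> is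
  large. Countably many annuli and exponents \<open>n + 1/j\<close> then cover all \<open>x \<noteq> 0\<close> and all \<open>v > n\<close>.\<close>

definition int_vectors :: "nat \<Rightarrow> (nat \<Rightarrow> int) set" where
  "int_vectors k = {q. \<forall>i\<ge>k. q i = 0}"

definition approximants :: "(nat \<Rightarrow> real) \<Rightarrow> real \<Rightarrow> nat \<Rightarrow> (nat \<Rightarrow> int) set" where
  "approximants y v k = {q \<in> int_vectors k. \<exists>p::int.
      \<bar>(\<Sum>i<k. y i * real_of_int (q i)) + real_of_int p\<bar> \<le> supnorm k q powr (- v)}"

lemma W_iff_infinite_approximants: "y \<in> W v k \<longleftrightarrow> infinite (approximants y v k)"
  by (simp add: W_def approximants_def int_vectors_def)

lemma abs_le_supnorm: "i < k \<Longrightarrow> \<bar>real_of_int (q i)\<bar> \<le> supnorm k q"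
  unfolding supnorm_def by (rule Max_ge) auto

lemma supnorm_le: "0 < k \<Longrightarrow> (\<And>i. i < k \<Longrightarrow> \<bar>real_of_int (q i)\<bar> \<le> B) \<Longrightarrow> supnorm k q \<le> B"
  unfolding supnorm_def by (subst Max_le_iff) auto

lemma supnorm_nonneg: "0 < k \<Longrightarrow> 0 \<le> supnorm k q"
  using abs_le_supnorm[of 0 k q] by linarith

lemma supnorm_ge_1:
  assumes "q \<in> int_vectors k" "q \<noteq> (\<lambda>_. 0)"
  shows "1 \<le> supnorm k q"
proof -
  obtain j where j: "q j \<noteq> 0" using assms(2) by auto
  with assms(1) have "j < k" unfolding int_vectors_def by (auto simp: not_less[symmetric])
  have "1 \<le> \<bar>real_of_int (q j)\<bar>" using j by linarith
  also have "\<dots> \<le> supnorm k q" using \<open>j < k\<close> by (rule abs_le_supnorm)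
  finally show ?thesis .
qed

lemma supnorm_tail_le: "0 < k \<Longrightarrow> supnorm k (\<lambda>i. q (Suc i)) \<le> supnorm (Suc k) q"
  by (rule supnorm_le) (simp_all add: abs_le_supnorm)

lemma W_antimono:
  assumes "u \<le> v"
  shows "W v k \<subseteq> W u k"
proof
  fix y assume "y \<in> W v k"
  have "approximants y v k \<subseteq> insert (\<lambda>_. 0) (approximants y u k)"
  proof
    fix q assume q: "q \<in> approximants y v k"
    show "q \<in> insert (\<lambda>_. 0) (approximants y u k)"
    proof (cases "q = (\<lambda>_. 0)")
      case False
      have "1 \<le> supnorm k q"
        using q False by (intro supnorm_ge_1) (auto simp: approximants_def)
      then have "supnorm k q powr (- v) \<le> supnorm k q powr (- u)"
        using assms by (intro powr_mono) auto
      then show ?thesis using q by (auto simp: approximants_def intro: order_trans)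
    qed simp
  qed
  then show "y \<in> W u k"
    using \<open>y \<in> W v k\<close> by (auto simp: W_iff_infinite_approximants dest: finite_subset)
qed

lemma finite_int_vectors_box: "finite {q \<in> int_vectors k. \<forall>i<k. \<bar>q i\<bar> \<le> N}"
proof -
  have "{q \<in> int_vectors k. \<forall>i<k. \<bar>q i\<bar> \<le> N}
      = {f. \<forall>x. (x \<in> {..<k} \<longrightarrow> f x \<in> {-N..N}) \<and> (x \<notin> {..<k} \<longrightarrow> f x = 0)}"
    by (auto simp: int_vectors_def abs_le_iff not_less)
  then show ?thesis using finite_set_of_finite_funs[of "{..<k}" "{-N..N}" 0] by simp
qed

lemma finite_supnorm_le: "finite {q \<in> int_vectors k. supnorm k q \<le> B}"
proof (rule finite_subset[OF _ finite_int_vectors_box[of k "\<lceil>B\<rceil>"]])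
  show "{q \<in> int_vectors k. supnorm k q \<le> B} \<subseteq> {q \<in> int_vectors k. \<forall>i<k. \<bar>q i\<bar> \<le> \<lceil>B\<rceil>}"
  proof safe
    fix q i assume "q \<in> int_vectors k" "supnorm k q \<le> B" "i < k"
    then have "\<bar>real_of_int (q i)\<bar> \<le> B" using abs_le_supnorm[of i k q] by linarith
    then show "\<bar>q i\<bar> \<le> \<lceil>B\<rceil>" by (simp add: le_ceiling_iff)
  qed
qed

lemma countable_int_vectors: "countable (int_vectors k)"
proof -
  have "int_vectors k = (\<Union>N::nat. {q \<in> int_vectors k. \<forall>i<k. \<bar>q i\<bar> \<le> int N})"
  proof (intro equalityI subsetI)
    fix q assume "q \<in> int_vectors k"
    moreover have "\<bar>q i\<bar> \<le> int (nat (\<Sum>i<k. \<bar>q i\<bar>))" if "i < k" for i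
      using member_le_sum[of i "{..<k}" "\<lambda>i. \<bar>q i\<bar>"] that by auto
    ultimately show "q \<in> (\<Union>N. {q \<in> int_vectors k. \<forall>i<k. \<bar>q i\<bar> \<le> int N})" by blast
  qed auto
  also have "countable \<dots>"
    by (rule countable_UN) (auto intro: countable_finite finite_int_vectors_box)
  finally show ?thesis .
qed

lemma sum_int_vectors_box_prod:
  fixes g :: "int \<Rightarrow> real"
  shows "(\<Sum>q\<in>{q \<in> int_vectors k. \<forall>i<k. \<bar>q i\<bar> \<le> N}. \<Prod>i<k. g (q i)) = (\<Sum>z\<in>{-N..N}. g z) ^ k"
proof -
  have "(\<Sum>z\<in>{-N..N}. g z) ^ k = (\<Prod>i<k. \<Sum>z\<in>{-N..N}. g z)" by simp
  also have "\<dots> = (\<Sum>h\<in>PiE {..<k} (\<lambda>_. {-N..N}). \<Prod>i<k. g (h i))"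
    by (rule prod_sum_PiE) auto
  also have "\<dots> = (\<Sum>q\<in>{q \<in> int_vectors k. \<forall>i<k. \<bar>q i\<bar> \<le> N}. \<Prod>i<k. g (q i))"
    by (rule sum.reindex_bij_witness[of _ "\<lambda>q. restrict q {..<k}" "\<lambda>h j. if j < k then h j else 0"])
       (auto simp: int_vectors_def PiE_def Pi_def extensional_def abs_le_iff not_less fun_eq_iff)
  finally show ?thesis by simp
qed

lemma summable_on_int_powr:
  assumes "s > 1"
  shows "(\<lambda>z::int. (1 + \<bar>real_of_int z\<bar>) powr (- s)) summable_on UNIV"
proof -
  let ?g = "\<lambda>z::int. (1 + \<bar>real_of_int z\<bar>) powr (- s)"
  have "summable (\<lambda>n. real n powr (- s))"
    using assms by (simp add: summable_real_powr_iff)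
  then have "summable (\<lambda>n. real (Suc n) powr (- s))"
    by (subst summable_Suc_iff)
  then have nat: "(\<lambda>n. (1 + real n) powr (- s)) summable_on UNIV"
    by (subst summable_on_UNIV_nonneg_real_iff) (simp_all add: add.commute)
  have "?g summable_on (int ` UNIV)"
    using nat by (subst summable_on_reindex) (simp_all add: inj_on_def o_def)
  moreover have "?g summable_on ((\<lambda>n. - int n) ` UNIV)"
    using nat by (subst summable_on_reindex) (simp_all add: inj_on_def o_def)
  ultimately have "?g summable_on (int ` UNIV \<union> (\<lambda>n. - int n) ` UNIV)"
    by (rule summable_on_union)
  also have "int ` UNIV \<union> (\<lambda>n. - int n) ` UNIV = UNIV"
  proof (intro equalityI subsetI UnCI)
    fix z :: int assume "z \<notin> (\<lambda>n. - int n) ` UNIV"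
    then have "z = int (nat z)" by (cases "0 \<le> z") (auto intro: range_eqI[of _ _ "nat (- z)"])
    then show "z \<in> int ` UNIV" by (rule range_eqI)
  qed simp
  finally show ?thesis .
qed

lemma supnorm_powr_le_prod:
  assumes q: "q \<in> int_vectors k" "q \<noteq> (\<lambda>_. 0)" and s: "0 \<le> s"
  shows "supnorm k q powr (- (s * k)) \<le> 2 powr (s * k) * (\<Prod>i<k. (1 + \<bar>real_of_int (q i)\<bar>) powr (- s))"
proof -
  define M where "M = supnorm k q"
  have M1: "1 \<le> M" unfolding M_def using q by (rule supnorm_ge_1)
  have "(2 * M) powr (- (s * k)) = (\<Prod>i<k. (2 * M) powr (- s))"
    using M1 by (simp add: powr_realpow[symmetric] powr_powr mult.commute)
  also have "\<dots> \<le> (\<Prod>i<k. (1 + \<bar>real_of_int (q i)\<bar>) powr (- s))"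
  proof (rule prod_mono)
    fix i assume "i \<in> {..<k}"
    then have "\<bar>real_of_int (q i)\<bar> \<le> M" unfolding M_def by (intro abs_le_supnorm) auto
    then show "0 \<le> (2 * M) powr (- s) \<and> (2 * M) powr (- s) \<le> (1 + \<bar>real_of_int (q i)\<bar>) powr (- s)"
      using s M1 by (auto intro!: powr_mono2')
  qed
  finally have weighted: "2 powr (- (s * k)) * M powr (- (s * k)) \<le> (\<Prod>i<k. (1 + \<bar>real_of_int (q i)\<bar>) powr (- s))"
    using M1 by (simp add: powr_mult)
  have "M powr (- (s * k)) = 2 powr (s * k) * (2 powr (- (s * k)) * M powr (- (s * k)))"
    by (simp add: powr_minus mult.assoc[symmetric])
  also have "\<dots> \<le> 2 powr (s * k) * (\<Prod>i<k. (1 + \<bar>real_of_int (q i)\<bar>) powr (- s))"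
    using weighted by (rule mult_left_mono) simp
  finally show ?thesis unfolding M_def .
qed

lemma summable_on_supnorm_powr:
  assumes v: "v > real k"
  shows "(\<lambda>q. supnorm k q powr (- v)) summable_on (int_vectors k - {\<lambda>_. 0})"
proof (cases "k = 0")
  case True
  then have "int_vectors k - {\<lambda>_. 0} = {}" by (auto simp: int_vectors_def)
  then show ?thesis by (simp only: summable_on_empty)
next
  case False
  define s where "s = v / real k"
  have s: "s > 1" "v = s * real k" using v False by (simp_all add: s_def field_simps)
  define g where "g = (\<lambda>z::int. (1 + \<bar>real_of_int z\<bar>) powr (- s))"
  have g: "g summable_on UNIV" unfolding g_def using s(1) by (rule summable_on_int_powr)
  have "(\<Sum>q\<in>F. supnorm k q powr (- v)) \<le> 2 powr v * infsum g UNIV ^ k"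
    if F: "finite F" "F \<subseteq> int_vectors k - {\<lambda>_. 0}" for F
  proof -
    define N where "N = (\<Sum>q\<in>F. \<Sum>i<k. \<bar>q i\<bar>)"
    define B where "B = {q \<in> int_vectors k. \<forall>i<k. \<bar>q i\<bar> \<le> N}"
    have "F \<subseteq> B"
    proof
      fix q assume q: "q \<in> F"
      have "\<bar>q i\<bar> \<le> N" if "i < k" for i
      proof -
        have "\<bar>q i\<bar> \<le> (\<Sum>i<k. \<bar>q i\<bar>)" using that by (intro member_le_sum) auto
        also have "\<dots> \<le> N" unfolding N_def using q F(1)
          by (intro member_le_sum[of q F "\<lambda>q. \<Sum>i<k. \<bar>q i\<bar>"]) (auto intro: sum_nonneg)
        finally show ?thesis .
      qed
      then show "q \<in> B" using q F(2) unfolding B_def by auto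
    qed
    have "(\<Sum>q\<in>F. supnorm k q powr (- v)) \<le> (\<Sum>q\<in>F. 2 powr v * (\<Prod>i<k. g (q i)))"
      using F(2) s unfolding g_def by (intro sum_mono) (auto intro: supnorm_powr_le_prod)
    also have "\<dots> \<le> (\<Sum>q\<in>B. 2 powr v * (\<Prod>i<k. g (q i)))"
      using \<open>F \<subseteq> B\<close> unfolding B_def g_def
      by (intro sum_mono2 finite_int_vectors_box) (auto intro!: prod_nonneg mult_nonneg_nonneg)
    also have "\<dots> = 2 powr v * (\<Sum>z\<in>{-N..N}. g z) ^ k"
      unfolding B_def by (simp add: sum_distrib_left[symmetric] sum_int_vectors_box_prod)
    also have "\<dots> \<le> 2 powr v * infsum g UNIV ^ k"
      using g unfolding g_def
      by (intro mult_left_mono power_mono finite_sum_le_infsum sum_nonneg) auto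
    finally show ?thesis .
  qed
  then show ?thesis
    by (intro nonneg_bdd_above_summable_on bdd_aboveI) auto
qed

lemma borel_cantelli_AE_countable:
  fixes A :: "'i \<Rightarrow> 'a set"
  assumes I: "countable I"
    and sets: "\<And>i. i \<in> I \<Longrightarrow> A i \<in> sets M"
    and fin: "\<And>i. i \<in> I \<Longrightarrow> emeasure M (A i) < \<infinity>"
    and summable: "(\<lambda>i. measure M (A i)) summable_on I"
  shows "AE x in M. finite {i \<in> I. x \<in> A i}"
proof (cases "finite I")
  case True
  then show ?thesis by simp
next
  case False
  define e where "e = from_nat_into I"
  have e: "bij_betw e UNIV I"
    unfolding e_def using bij_betw_from_nat_into[OF I False] .
  then have eI: "e j \<in> I" for j by (auto simp: bij_betw_def)
  have "summable (\<lambda>j. measure M (A (e j)))"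
    using summable_on_reindex_bij_betw[OF e, of "\<lambda>i. measure M (A i)"] summable
    by (subst summable_on_UNIV_nonneg_real_iff[symmetric]) simp_all
  then have "AE x in M. eventually (\<lambda>j. x \<in> space M - A (e j)) sequentially"
    using sets fin eI by (intro borel_cantelli_AE1) auto
  then show ?thesis
  proof (rule eventually_mono)
    fix x assume "eventually (\<lambda>j. x \<in> space M - A (e j)) sequentially"
    then obtain N where N: "\<And>j. N \<le> j \<Longrightarrow> x \<notin> A (e j)"
      by (auto simp: eventually_sequentially)
    have "{i \<in> I. x \<in> A i} \<subseteq> e ` {..<N}"
    proof
      fix i assume i: "i \<in> {i \<in> I. x \<in> A i}"
      then obtain j where j: "i = e j" using e by (auto simp: bij_betw_def)
      with i N have "j < N" using not_le by blast
      with j show "i \<in> e ` {..<N}" by simp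
    qed
    then show "finite {i \<in> I. x \<in> A i}" by (rule finite_subset) simp
  qed
qed

definition line_form :: "(nat \<Rightarrow> real) \<Rightarrow> nat \<Rightarrow> (nat \<Rightarrow> int) \<Rightarrow> real" where
  "line_form b m q = real_of_int (q 0) + (\<Sum>i<m. b i * real_of_int (q (Suc i)))"

lemma sum_line_point_mult:
  "(\<Sum>i<Suc m. (if i = 0 then x else b (i - 1) * x) * real_of_int (q i)) = x * line_form b m q"
  unfolding line_form_def by (subst sum.lessThan_Suc_shift) (simp add: sum_distrib_left algebra_simps)

lemma supnorm_powr_le_1:
  assumes "q \<in> int_vectors k" "0 < k" "0 \<le> v"
  shows "supnorm k q powr (- v) \<le> 1"
proof (cases "q = (\<lambda>_. 0)")
  case True
  have "supnorm k q \<le> 0" unfolding True using \<open>0 < k\<close> by (rule supnorm_le) simp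
  then show ?thesis using supnorm_nonneg[OF \<open>0 < k\<close>, of q] by simp
next
  case False
  then have "1 \<le> supnorm k q" using assms(1) by (rule supnorm_ge_1[rotated])
  then show ?thesis using assms(3) powr_mono2'[of "- v" 1 "supnorm k q"] by simp
qed

text \<open>Once the tail \<open>q'\<close> is large, \<open>\<bar>L(q)\<bar> \<le> \<bar>q\<bar>\<^sup>-\<^sup>v / a \<le> \<bar>q'\<bar>\<^sup>-\<^sup>u\<close> makes \<open>q'\<close> an approximant
  of \<open>b\<close> with exponent \<open>u\<close>, and there are only finitely many of those.\<close>

lemma bounded_tails_of_small_line_form:
  assumes b: "b \<notin> W u m" and uv: "0 < u" "u < v" and a: "0 < a" and m: "0 < m"
  obtains N where "\<And>q. q \<in> int_vectors (Suc m) \<Longrightarrow>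
      \<bar>line_form b m q\<bar> \<le> supnorm (Suc m) q powr (- v) / a \<Longrightarrow> supnorm m (\<lambda>i. q (Suc i)) \<le> N"
proof -
  have "finite (approximants b u m)" using b by (simp add: W_iff_infinite_approximants)
  then obtain N1 where N1: "\<And>q'. q' \<in> approximants b u m \<Longrightarrow> supnorm m q' \<le> N1"
    using bdd_above_finite[of "supnorm m ` approximants b u m"] by (auto simp: bdd_above_def)
  have "((\<lambda>s::real. s powr (u - v)) \<longlongrightarrow> 0) at_top"
    using uv by (intro tendsto_neg_powr filterlim_ident) auto
  then have "eventually (\<lambda>s::real. s powr (u - v) < a) at_top"
    using a by (intro order_tendstoD) auto
  then obtain N0 where N0: "\<And>s. s \<ge> N0 \<Longrightarrow> s powr (u - v) < a"
    by (auto simp: eventually_at_top_linorder)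
  show ?thesis
  proof
    fix q assume q: "q \<in> int_vectors (Suc m)"
      and small: "\<bar>line_form b m q\<bar> \<le> supnorm (Suc m) q powr (- v) / a"
    define q' where "q' = (\<lambda>i. q (Suc i))"
    define s where "s = supnorm m q'"
    show "s \<le> max (max N0 1) N1"
    proof (cases "s \<le> max N0 1")
      case False
      then have s: "1 \<le> s" "N0 \<le> s" by auto
      have "\<bar>(\<Sum>i<m. b i * real_of_int (q' i)) + real_of_int (q 0)\<bar> = \<bar>line_form b m q\<bar>"
        unfolding line_form_def q'_def by simp
      also have "\<dots> \<le> supnorm (Suc m) q powr (- v) / a" by (rule small)
      also have "\<dots> \<le> s powr (- v) / a"
        using s a uv supnorm_tail_le[OF m, of q]
        by (intro divide_right_mono powr_mono2') (auto simp: s_def q'_def)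
      also have "\<dots> = s powr (- u) * (s powr (u - v) / a)"
        using s by (simp add: powr_add[symmetric])
      also have "\<dots> \<le> s powr (- u)"
        using N0[OF s(2)] a by (intro mult_left_le) auto
      finally have "q' \<in> approximants b u m"
        using q unfolding approximants_def int_vectors_def s_def q'_def by auto
      then show ?thesis unfolding s_def using N1 by fastforce
    qed simp
  qed
qed

lemma finite_small_line_form:
  assumes "b \<notin> W u m" and uv: "0 < u" "u < v" and a: "0 < a" and "0 < m"
  shows "finite {q \<in> int_vectors (Suc m). \<bar>line_form b m q\<bar> \<le> supnorm (Suc m) q powr (- v) / a}"
proof -
  obtain N where N: "\<And>q. q \<in> int_vectors (Suc m) \<Longrightarrow>
      \<bar>line_form b m q\<bar> \<le> supnorm (Suc m) q powr (- v) / a \<Longrightarrow> supnorm m (\<lambda>i. q (Suc i)) \<le> N"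
    using bounded_tails_of_small_line_form[OF assms] by blast
  define B where "B = max N (1 / a + (\<Sum>i<m. \<bar>b i\<bar> * N))"
  have "supnorm (Suc m) q \<le> B"
    if q: "q \<in> int_vectors (Suc m)" and small: "\<bar>line_form b m q\<bar> \<le> supnorm (Suc m) q powr (- v) / a" for q
  proof (rule supnorm_le)
    have tail: "\<bar>real_of_int (q (Suc i))\<bar> \<le> N" if "i < m" for i
      using abs_le_supnorm[OF that, of "\<lambda>i. q (Suc i)"] N[OF q small] by simp
    fix i assume "i < Suc m"
    show "\<bar>real_of_int (q i)\<bar> \<le> B"
    proof (cases i)
      case 0
      have "\<bar>\<Sum>i<m. b i * real_of_int (q (Suc i))\<bar> \<le> (\<Sum>i<m. \<bar>b i\<bar> * N)"
        using tail by (intro order_trans[OF sum_abs] sum_mono) (auto simp: abs_mult intro: mult_left_mono)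
      moreover have "supnorm (Suc m) q powr (- v) / a \<le> 1 / a"
        using supnorm_powr_le_1[OF q, of v] uv a by (intro divide_right_mono) auto
      ultimately show ?thesis
        using small unfolding 0 line_form_def B_def by linarith
    next
      case (Suc j)
      then show ?thesis using tail[of j] \<open>i < Suc m\<close> unfolding B_def by auto
    qed
  qed simp
  then show ?thesis
    by (intro finite_subset[OF _ finite_supnorm_le[of "Suc m" B]]) auto
qed

text \<open>The \<open>d/\<bar>r\<bar>\<close>-neighbourhood of the points \<open>p/\<bar>r\<bar>\<close> near \<open>[-M, M]\<close>, meant to contain every \<open>x\<close>
  with \<open>a \<le> \<bar>x\<bar> \<le> M\<close> and \<open>x r\<close> within \<open>d\<close> of an integer when \<open>d / a < \<bar>r\<bar>\<close>. It may be taken empty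
  for \<open>\<bar>r\<bar> < 1/(2M)\<close>: then \<open>\<bar>x r\<bar> < 1/2\<close> forces that integer to be \<open>0\<close>, so \<open>\<bar>x\<bar> \<le> d/\<bar>r\<bar> < a\<close>.\<close>

definition lattice_nbhd :: "real \<Rightarrow> real \<Rightarrow> real \<Rightarrow> real set" where
  "lattice_nbhd M r d = (if 1 / (2 * M) \<le> \<bar>r\<bar> then
     (\<Union>p\<in>{-(\<lceil>M * \<bar>r\<bar>\<rceil> + 1)..\<lceil>M * \<bar>r\<bar>\<rceil> + 1}. {(- real_of_int p - d) / \<bar>r\<bar> .. (- real_of_int p + d) / \<bar>r\<bar>})
   else {})"

lemma lattice_nbhd_sets: "lattice_nbhd M r d \<in> sets lborel"
  unfolding lattice_nbhd_def by (auto intro!: borel_closed closed_UN)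

lemma emeasure_lattice_nbhd_finite: "emeasure lborel (lattice_nbhd M r d) < \<infinity>"
  unfolding lattice_nbhd_def
  by (cases "1 / (2 * M) \<le> \<bar>r\<bar>", simp_all only: if_True if_False)
     (rule emeasure_compact_finite, rule compact_UN, auto)

lemma measure_lattice_nbhd_le:
  assumes M: "0 < M" and d: "0 \<le> d"
  shows "measure lborel (lattice_nbhd M r d) \<le> 24 * M * d"
proof (cases "1 / (2 * M) \<le> \<bar>r\<bar>")
  case False
  then show ?thesis unfolding lattice_nbhd_def using M d by simp
next
  case True
  define R where "R = \<bar>r\<bar>"
  have R: "0 < R" "1 / (2 * M) \<le> R"
    using True M unfolding R_def by (auto intro: less_le_trans[of 0 "1 / (2 * M)"])
  define K where "K = \<lceil>M * R\<rceil> + 1"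
  have "0 < M * R" using R M by simp
  then have K: "real_of_int K \<le> M * R + 2" "1 \<le> K"
    unfolding K_def by linarith+
  have "measure lborel (lattice_nbhd M r d)
      = measure lborel (\<Union>p\<in>{-K..K}. {(- real_of_int p - d) / R .. (- real_of_int p + d) / R})"
    unfolding lattice_nbhd_def K_def R_def using True by simp
  also have "\<dots> \<le> (\<Sum>p\<in>{-K..K}. measure lborel {(- real_of_int p - d) / R .. (- real_of_int p + d) / R})"
    by (rule measure_UNION_le) auto
  also have "\<dots> = (\<Sum>p\<in>{-K..K}. 2 * d / R)"
  proof (rule sum.cong)
    fix p assume "p \<in> {-K..K}"
    have "(- real_of_int p - d) / R \<le> (- real_of_int p + d) / R"
      using R d by (intro divide_right_mono) auto
    then show "measure lborel {(- real_of_int p - d) / R .. (- real_of_int p + d) / R} = 2 * d / R"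
      by (simp add: diff_divide_distrib add_divide_distrib)
  qed simp
  also have "\<dots> = real_of_int (2 * K + 1) * (2 * d / R)" using K by simp
  also have "\<dots> \<le> (2 * (M * R + 2) + 1) * (2 * d / R)"
    using K d R by (intro mult_right_mono) auto
  also have "\<dots> = 4 * M * d + 10 * (d * (1 / R))" using R by (simp add: field_simps)
  also have "\<dots> \<le> 4 * M * d + 10 * (d * (2 * M))"
    using R M d by (intro add_left_mono mult_left_mono) (auto simp: field_simps)
  finally show ?thesis by simp
qed

lemma mem_lattice_nbhd:
  assumes M: "0 < M" and a: "0 < a" and d: "0 \<le> d" "d \<le> 1/2" and r: "d / a < \<bar>r\<bar>"
    and x: "a \<le> \<bar>x\<bar>" "\<bar>x\<bar> \<le> M" and p: "\<bar>x * r + real_of_int p\<bar> \<le> d"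
  shows "x \<in> lattice_nbhd M r d"
proof -
  define R where "R = \<bar>r\<bar>"
  have R0: "0 < R" using r d a unfolding R_def by (meson divide_nonneg_pos le_less_trans)
  have xr: "\<bar>x * r\<bar> \<le> M * R" unfolding R_def abs_mult using x by (intro mult_right_mono) auto
  have RM: "1 / (2 * M) \<le> R"
  proof (rule ccontr)
    assume "\<not> 1 / (2 * M) \<le> R"
    then have MR: "M * R < 1/2" using M by (simp add: field_simps)
    show False
    proof (cases "p = 0")
      case True
      then have "\<bar>x\<bar> * R \<le> d" using p unfolding R_def by (simp add: abs_mult)
      moreover have "a * R \<le> \<bar>x\<bar> * R" using x R0 by (intro mult_right_mono) auto
      ultimately have "R \<le> d / a" using a by (simp add: field_simps)
      then show False using r unfolding R_def by simp
    next
      case False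
      then have "1 \<le> \<bar>real_of_int p\<bar>" by linarith
      then show False using p xr d MR by linarith
    qed
  qed
  define p' where "p' = (if 0 \<le> r then p else - p)"
  have p': "\<bar>x * R + real_of_int p'\<bar> \<le> d"
    using p unfolding p'_def R_def by (cases "0 \<le> r") (auto simp: abs_minus_commute)
  have "\<bar>real_of_int p\<bar> \<le> M * R + 1" using xr p d by linarith
  then have pK: "\<bar>p'\<bar> \<le> \<lceil>M * R\<rceil> + 1" unfolding p'_def by (cases "0 \<le> r") (auto, linarith+)
  have "x \<in> {(- real_of_int p' - d) / R .. (- real_of_int p' + d) / R}"
    using p' R0 by (auto simp: field_simps abs_le_iff)
  then show ?thesis
    unfolding lattice_nbhd_def using RM pK unfolding R_def
    by (auto simp: abs_le_iff intro!: bexI[of _ p'])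
qed

lemma AE_finitely_many_lattice_nbhds:
  assumes v: "real k < v" and M: "0 < M" and I: "I \<subseteq> int_vectors k - {\<lambda>_. 0}"
  shows "AE x in lborel. finite {q \<in> I. x \<in> lattice_nbhd M (r q) (supnorm k q powr (- v))}"
proof (rule borel_cantelli_AE_countable)
  show "countable I" by (rule countable_subset[OF _ countable_int_vectors]) (use I in auto)
  have "(\<lambda>q. 24 * M * supnorm k q powr (- v)) summable_on I"
    using summable_on_supnorm_powr[OF v] I by (intro summable_on_cmult_right) (rule summable_on_subset)
  then show "(\<lambda>q. measure lborel (lattice_nbhd M (r q) (supnorm k q powr (- v)))) summable_on I"
    by (rule summable_on_comparison_test) (simp_all add: measure_lattice_nbhd_le M)
qed (rule lattice_nbhd_sets emeasure_lattice_nbhd_finite)+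

lemma approximant_mem_lattice_nbhd:
  assumes q: "q \<in> approximants (\<lambda>i. if i = 0 then x else b (i - 1) * x) v (Suc m)"
    and large: "2 \<le> supnorm (Suc m) q" and not_small: "supnorm (Suc m) q powr (- v) / a < \<bar>line_form b m q\<bar>"
    and v: "1 \<le> v" and a: "0 < a" and M: "0 < M" and x: "a \<le> \<bar>x\<bar>" "\<bar>x\<bar> \<le> M"
  shows "x \<in> lattice_nbhd M (line_form b m q) (supnorm (Suc m) q powr (- v))"
proof -
  obtain p :: int where p: "\<bar>x * line_form b m q + real_of_int p\<bar> \<le> supnorm (Suc m) q powr (- v)"
    using q unfolding approximants_def sum_line_point_mult by blast
  have "supnorm (Suc m) q powr (- v) \<le> 2 powr (- v)"
    using large v by (intro powr_mono2') auto
  also have "\<dots> \<le> 2 powr (- 1)" using v by (intro powr_mono) auto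
  finally show ?thesis
    using p by (intro mem_lattice_nbhd[OF M a _ _ not_small x]) simp_all
qed

lemma AE_line_point_notin_W_annulus:
  fixes b :: "nat \<Rightarrow> real"
  assumes m: "0 < m" and b: "b \<notin> W_plus (real (Suc m)) m" and v: "real (Suc m) < v"
    and a: "0 < a" and M: "0 < M"
  shows "AE x in lborel. a \<le> \<bar>x\<bar> \<and> \<bar>x\<bar> \<le> M \<longrightarrow>
           (\<lambda>i. if i = 0 then x else b (i - 1) * x) \<notin> W v (Suc m)"
proof -
  define d where "d q = supnorm (Suc m) q powr (- v)" for q
  define Bad where "Bad = {q \<in> int_vectors (Suc m). supnorm (Suc m) q \<le> 2}
      \<union> {q \<in> int_vectors (Suc m). \<bar>line_form b m q\<bar> \<le> d q / a}"
  define A where "A q = lattice_nbhd M (line_form b m q) (d q)" for q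
  have "finite Bad"
  proof -
    define u where "u = (real (Suc m) + v) / 2"
    have "b \<notin> W u m" using b v unfolding W_plus_def u_def by auto
    moreover have "0 < u" "u < v" using v unfolding u_def by auto
    ultimately show ?thesis
      unfolding Bad_def d_def using finite_supnorm_le finite_small_line_form a m by blast
  qed
  have "int_vectors (Suc m) - Bad \<subseteq> int_vectors (Suc m) - {\<lambda>_. 0}"
    unfolding Bad_def using supnorm_le[of "Suc m" "\<lambda>_. 0" 2] by auto
  then have "AE x in lborel. finite {q \<in> int_vectors (Suc m) - Bad. x \<in> A q}"
    unfolding A_def d_def using v M by (intro AE_finitely_many_lattice_nbhds) auto
  then show ?thesis
  proof (rule eventually_mono, intro impI notI)
    fix x
    assume fin: "finite {q \<in> int_vectors (Suc m) - Bad. x \<in> A q}" and x: "a \<le> \<bar>x\<bar> \<and> \<bar>x\<bar> \<le> M"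
      and W: "(\<lambda>i. if i = 0 then x else b (i - 1) * x) \<in> W v (Suc m)"
    have "approximants (\<lambda>i. if i = 0 then x else b (i - 1) * x) v (Suc m)
        \<subseteq> Bad \<union> {q \<in> int_vectors (Suc m) - Bad. x \<in> A q}"
      unfolding A_def d_def Bad_def using v a M x
      by (auto intro!: approximant_mem_lattice_nbhd simp: approximants_def not_less)
    with fin \<open>finite Bad\<close> W show False
      by (auto simp: W_iff_infinite_approximants dest: finite_subset)
  qed
qed

lemma AE_line_point_notin_W:
  fixes b :: "nat \<Rightarrow> real"
  assumes "0 < m" and "b \<notin> W_plus (real (Suc m)) m" and "real (Suc m) < v"
  shows "AE x in lborel. (\<lambda>i. if i = 0 then x else b (i - 1) * x) \<notin> W v (Suc m)"
proof -
  have "AE x in lborel. \<forall>k::nat. 1 / real (Suc k) \<le> \<bar>x\<bar> \<and> \<bar>x\<bar> \<le> real (Suc k) \<longrightarrow>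
           (\<lambda>i. if i = 0 then x else b (i - 1) * x) \<notin> W v (Suc m)"
    using assms by (subst AE_all_countable) (auto intro: AE_line_point_notin_W_annulus)
  with AE_lborel_singleton[of 0] show ?thesis
  proof eventually_elim
    case (elim x)
    define k where "k = nat \<lceil>max \<bar>x\<bar> (1 / \<bar>x\<bar>)\<rceil>"
    have "\<bar>x\<bar> \<le> real (Suc k)" "1 / \<bar>x\<bar> \<le> real (Suc k)" unfolding k_def by linarith+
    moreover have "0 < \<bar>x\<bar>" using elim by simp
    ultimately have "1 / real (Suc k) \<le> \<bar>x\<bar> \<and> \<bar>x\<bar> \<le> real (Suc k)"
      by (simp add: field_simps)
    with elim show ?case by blast
  qed
qed

theorem proposition4p7:
  fixes n :: nat and b :: "nat \<Rightarrow> real"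
  assumes "n \<ge> 2"
    and "b \<notin> W_plus (real n) (n - 1)"
  shows "extremal n (\<lambda>x. (\<lambda>i. if i = 0 then x else b (i - 1) * x))"
proof -
  obtain m where n: "n = Suc m" and m: "0 < m" using assms(1) by (cases n) auto
  have b: "b \<notin> W_plus (real (Suc m)) m" using assms(2) n by simp
  have "AE x in lborel. \<forall>j::nat.
      (\<lambda>i. if i = 0 then x else b (i - 1) * x) \<notin> W (real n + 1 / real (Suc j)) n"
    unfolding n by (subst AE_all_countable) (auto intro: AE_line_point_notin_W[OF m b])
  then show ?thesis
    unfolding extremal_def
  proof (rule eventually_mono, intro notI)
    fix x
    assume notin: "\<forall>j::nat. (\<lambda>i. if i = 0 then x else b (i - 1) * x) \<notin> W (real n + 1 / real (Suc j)) n"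
    assume "VWA n (\<lambda>i. if i = 0 then x else b (i - 1) * x)"
    then obtain v where v: "real n < v" "(\<lambda>i. if i = 0 then x else b (i - 1) * x) \<in> W v n"
      unfolding VWA_def by auto
    obtain j :: nat where "1 / real (Suc j) < v - real n"
      using v(1) by (metis diff_gt_0_iff_gt nat_approx_posE)
    then have "W v n \<subseteq> W (real n + 1 / real (Suc j)) n" by (intro W_antimono) simp
    then show False using v(2) notin by auto
  qed
qed

end
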